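(* Let $\mathcal{F}$ be an $N$-dimensional commutative algebra with basis $e_1,\dots,e_N$ and structure constants $a^k_{ij}$, such that $e_1$ is a unity element and $\mathcal{F}$ carries a non-degenerate symmetric inner product $\langle\,,\rangle$ with components $\eta_{ij}$ satisfying the Frobenius condition $\langle a\circ b,c\rangle=\langle a,b\circ c\rangle$. Let $h^{(3)}=\frac{1}{6}a_{ijk}u^iu^ju^k$ and $h^{(4)}=a^i_{jk}u^ju^k\,\partial h^{(3)}/\partial u^i$. Then $h^{(4)}$ is a conserved density if and only if $\mathcal{F}$ is a Jordan algebra.
   Context: Summation over repeated indices is understood; indices are raised and lowered with $\eta_{ij}$ and its inverse, so $a_{ijk}=\eta_{ir}a^r_{jk}$ (totally symmetric by the Frobenius condition). A conserved density is a function $h(u^1,\dots,u^N)$ satisfying, for all $k,p$, $a^i_{jk}u^j\,\partial^2 h/\partial u^i\partial u^p=a^i_{jp}u^j\,\partial^2 h/\partial u^i\partial u^k$. A commutative algebra is Jordan if $(x\circ y)\circ(x\circ x)=x\circ(y\circ(x\circ x))$ for all $x,y$. *)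

theory Defs
  imports "HOL-Analysis.Analysis"
begin

text \<open>Points u = (u^1,...,u^N) are functions from a finite index type 'n to real.
  Structure constants: a k i j stands for a^k_{ij}; metric: eta i j stands for eta_{ij}.\<close>

definition partial :: "'n \<Rightarrow> (('n \<Rightarrow> real) \<Rightarrow> real) \<Rightarrow> ('n \<Rightarrow> real) \<Rightarrow> real" where
  "partial i f u = deriv (\<lambda>t. f (u(i := t))) (u i)"

definition lowered :: "('n::finite \<Rightarrow> 'n \<Rightarrow> real) \<Rightarrow> ('n \<Rightarrow> 'n \<Rightarrow> 'n \<Rightarrow> real) \<Rightarrow> 'n \<Rightarrow> 'n \<Rightarrow> 'n \<Rightarrow> real" where
  "lowered eta a i j k = (\<Sum>r\<in>UNIV. eta i r * a r j k)"

definition alg_mult :: "('n::finite \<Rightarrow> 'n \<Rightarrow> 'n \<Rightarrow> real) \<Rightarrow> ('n \<Rightarrow> real) \<Rightarrow> ('n \<Rightarrow> real) \<Rightarrow> ('n \<Rightarrow> real)" where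
  "alg_mult a x y = (\<lambda>k. \<Sum>i\<in>UNIV. \<Sum>j\<in>UNIV. a k i j * x i * y j)"

definition is_jordan :: "('n::finite \<Rightarrow> 'n \<Rightarrow> 'n \<Rightarrow> real) \<Rightarrow> bool" where
  "is_jordan a \<longleftrightarrow> (\<forall>x y. alg_mult a (alg_mult a x y) (alg_mult a x x)
                         = alg_mult a x (alg_mult a y (alg_mult a x x)))"

definition h3 :: "('n::finite \<Rightarrow> 'n \<Rightarrow> real) \<Rightarrow> ('n \<Rightarrow> 'n \<Rightarrow> 'n \<Rightarrow> real) \<Rightarrow> ('n \<Rightarrow> real) \<Rightarrow> real" where
  "h3 eta a u = (1/6) * (\<Sum>i\<in>UNIV. \<Sum>j\<in>UNIV. \<Sum>k\<in>UNIV. lowered eta a i j k * u i * u j * u k)"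

definition h4 :: "('n::finite \<Rightarrow> 'n \<Rightarrow> real) \<Rightarrow> ('n \<Rightarrow> 'n \<Rightarrow> 'n \<Rightarrow> real) \<Rightarrow> ('n \<Rightarrow> real) \<Rightarrow> real" where
  "h4 eta a u = (\<Sum>i\<in>UNIV. \<Sum>j\<in>UNIV. \<Sum>k\<in>UNIV. a i j k * u j * u k * partial i (h3 eta a) u)"

definition conserved_density :: "('n::finite \<Rightarrow> 'n \<Rightarrow> 'n \<Rightarrow> real) \<Rightarrow> (('n \<Rightarrow> real) \<Rightarrow> real) \<Rightarrow> bool" where
  "conserved_density a h \<longleftrightarrow> (\<forall>u k p.
     (\<Sum>i\<in>UNIV. \<Sum>j\<in>UNIV. a i j k * u j * partial i (partial p h) u)
   = (\<Sum>i\<in>UNIV. \<Sum>j\<in>UNIV. a i j p * u j * partial i (partial k h) u))"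

end

theory Submission
  imports Defs
begin

(*
  Write \<langle>x, y\<rangle> for \<eta>_ij x^i y^j and x \<circ> y for the product. Invariance of the form gives
  h3 = \<langle>u, u \<circ> u\<rangle>/6 and h4 = \<langle>u \<circ> u, u \<circ> u\<rangle>/2, so the Hessian of h4 is
  H(x, y) = 2\<langle>x \<circ> y, u \<circ> u\<rangle> + 4\<langle>u \<circ> x, u \<circ> y\<rangle>. In the conservation condition the matrix
  a^i_jk u^j is contracted against H(., e_p), which replaces e_i by u \<circ> e_k. The second term of
  H is then symmetric in k and p, while the first term minus its transpose equals
  2\<langle>(u \<circ> e_k) \<circ> (u \<circ> u) - u \<circ> (e_k \<circ> (u \<circ> u)), e_p\<rangle>. Hence h4 is conserved iff the Jordan
  associator (x \<circ> y) \<circ> (x \<circ> x) - x \<circ> (y \<circ> (x \<circ> x)) pairs to zero with every e_p, i.e. by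
  non-degeneracy vanishes for y = e_k, i.e. by linearity in y vanishes identically.
*)

definition unit_vec :: "'n \<Rightarrow> 'n \<Rightarrow> real" where
  "unit_vec p = (\<lambda>j. if j = p then 1 else 0)"

definition pairing :: "('n::finite \<Rightarrow> 'n \<Rightarrow> real) \<Rightarrow> ('n \<Rightarrow> real) \<Rightarrow> ('n \<Rightarrow> real) \<Rightarrow> real" where
  "pairing eta x y = (\<Sum>i\<in>UNIV. \<Sum>j\<in>UNIV. x i * eta i j * y j)"

definition jordan_associator ::
    "('n::finite \<Rightarrow> 'n \<Rightarrow> 'n \<Rightarrow> real) \<Rightarrow> ('n \<Rightarrow> real) \<Rightarrow> ('n \<Rightarrow> real) \<Rightarrow> 'n \<Rightarrow> real" where
  "jordan_associator a x y = (\<lambda>k. alg_mult a (alg_mult a x y) (alg_mult a x x) k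
                                 - alg_mult a x (alg_mult a y (alg_mult a x x)) k)"

lemma sum_rotate3: "(\<Sum>i\<in>A. \<Sum>j\<in>B. \<Sum>k\<in>C. f i j k) = (\<Sum>j\<in>B. \<Sum>k\<in>C. \<Sum>i\<in>A. f i j k)"
  by (subst sum.swap) (simp add: sum.swap[where A = A])

lemma unit_vec_expansion: "(\<lambda>j. \<Sum>k\<in>UNIV. y k * unit_vec k j) = (y :: 'n::finite \<Rightarrow> real)"
  by (simp add: unit_vec_def fun_eq_iff if_distrib[of "(*) _"] cong: if_cong)

lemma alg_mult_sum_left:
  "alg_mult a (\<lambda>j. \<Sum>k\<in>A. c k * w k j) z = (\<lambda>i. \<Sum>k\<in>A. c k * alg_mult a (w k) z i)"
  unfolding alg_mult_def
  by (simp add: sum_distrib_left sum_distrib_right mult_ac sum.swap[where A = A])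

lemma alg_mult_sum_right:
  "alg_mult a z (\<lambda>j. \<Sum>k\<in>A. c k * w k j) = (\<lambda>i. \<Sum>k\<in>A. c k * alg_mult a z (w k) i)"
  unfolding alg_mult_def
  by (simp add: sum_distrib_left sum_distrib_right mult_ac sum.swap[where A = A])

lemma alg_mult_scale_right: "alg_mult a x (\<lambda>k. c * y k) = (\<lambda>k. c * alg_mult a x y k)"
  unfolding alg_mult_def by (simp add: algebra_simps sum_distrib_left)

lemma alg_mult_expand_left: "alg_mult a x z = (\<lambda>j. \<Sum>i\<in>UNIV. x i * alg_mult a (unit_vec i) z j)"
  using alg_mult_sum_left[of a x unit_vec UNIV z] by (simp add: unit_vec_expansion)

lemma alg_mult_expand_right: "alg_mult a z x = (\<lambda>j. \<Sum>i\<in>UNIV. x i * alg_mult a z (unit_vec i) j)"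
  using alg_mult_sum_right[of a z x unit_vec UNIV] by (simp add: unit_vec_expansion)

lemma alg_mult_unit_vec_right: "alg_mult a x (unit_vec k) i = (\<Sum>j\<in>UNIV. a i j k * x j)"
  unfolding alg_mult_def unit_vec_def by (simp add: if_distrib[of "(*) _"] mult_ac cong: if_cong)

lemma pairing_sum_left:
  "pairing eta (\<lambda>i. \<Sum>k\<in>A. c k * w k i) y = (\<Sum>k\<in>A. c k * pairing eta (w k) y)"
  unfolding pairing_def
  by (simp add: sum_distrib_left sum_distrib_right mult_ac sum.swap[where A = A])

lemma pairing_add_right: "pairing eta x (\<lambda>k. y k + z k) = pairing eta x y + pairing eta x z"
  unfolding pairing_def by (simp add: algebra_simps sum.distrib)

lemma pairing_scale_right: "pairing eta x (\<lambda>k. c * y k) = c * pairing eta x y"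
  unfolding pairing_def by (simp add: algebra_simps sum_distrib_left)

lemma pairing_diff_left: "pairing eta (\<lambda>k. x k - y k) z = pairing eta x z - pairing eta y z"
  unfolding pairing_def by (simp add: algebra_simps sum_subtractf)

lemma pairing_zero_left: "pairing eta (\<lambda>_. 0) y = 0"
  unfolding pairing_def by simp

lemma pairing_expand_left: "pairing eta x y = (\<Sum>i\<in>UNIV. x i * pairing eta (unit_vec i) y)"
  using pairing_sum_left[of eta x unit_vec UNIV y] by (simp add: unit_vec_expansion)

lemma pairing_unit_vec_right: "pairing eta x (unit_vec j) = (\<Sum>i\<in>UNIV. x i * eta i j)"
  unfolding pairing_def unit_vec_def by (simp add: if_distrib[of "(*) _"] cong: if_cong)

lemma pairing_alg_mult_lowered:
  "pairing eta x (alg_mult a y z)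
     = (\<Sum>i\<in>UNIV. \<Sum>j\<in>UNIV. \<Sum>k\<in>UNIV. lowered eta a i j k * x i * y j * z k)"
  unfolding pairing_def alg_mult_def lowered_def
  by (simp add: sum_distrib_left sum_distrib_right, rule sum.cong[OF refl], subst sum_rotate3)
    (simp add: mult_ac)

lemma pairing_unit_vec_eq_zero_iff:
  assumes nondeg: "\<And>v. (\<forall>j. (\<Sum>i\<in>UNIV. eta i j * v i) = 0) \<Longrightarrow> (\<forall>i. v i = 0)"
  shows "(\<forall>j. pairing eta v (unit_vec j) = 0) \<longleftrightarrow> v = (\<lambda>_. 0)"
  using nondeg[of v] by (auto simp: pairing_unit_vec_right mult.commute)

lemma jordan_associator_sum_right:
  "jordan_associator a x (\<lambda>j. \<Sum>k\<in>A. c k * w k j)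
     = (\<lambda>i. \<Sum>k\<in>A. c k * jordan_associator a x (w k) i)"
  unfolding jordan_associator_def
  by (simp add: alg_mult_sum_left alg_mult_sum_right right_diff_distrib sum_subtractf)

lemma is_jordan_iff_unit_vec:
  "is_jordan a \<longleftrightarrow> (\<forall>x k. jordan_associator a x (unit_vec k) = (\<lambda>_. 0))"
proof -
  have "jordan_associator a x y = (\<lambda>_. 0)"
    if "\<forall>k. jordan_associator a x (unit_vec k) = (\<lambda>_. 0)" for x y
  proof -
    have "jordan_associator a x y = (\<lambda>i. \<Sum>k\<in>UNIV. y k * jordan_associator a x (unit_vec k) i)"
      using jordan_associator_sum_right[of a x y unit_vec UNIV] by (simp add: unit_vec_expansion)
    with that show ?thesis by simp
  qed
  then show ?thesis
    unfolding is_jordan_def jordan_associator_def fun_eq_iff by auto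
qed

definition has_vderiv :: "(real \<Rightarrow> 'n \<Rightarrow> real) \<Rightarrow> ('n \<Rightarrow> real) \<Rightarrow> real \<Rightarrow> bool" where
  "has_vderiv V V' t \<longleftrightarrow> (\<forall>k. ((\<lambda>s. V s k) has_real_derivative V' k) (at t))"

lemma has_vderiv_coordinate_line: "has_vderiv (\<lambda>t. u(p := t)) (unit_vec p) t"
  unfolding has_vderiv_def unit_vec_def by (auto intro!: derivative_eq_intros)

lemma has_vderiv_const: "has_vderiv (\<lambda>_. c) (\<lambda>_. 0) t"
  unfolding has_vderiv_def by simp

lemma has_vderiv_alg_mult:
  assumes "has_vderiv V V' t" "has_vderiv W W' t"
  shows "has_vderiv (\<lambda>s. alg_mult a (V s) (W s))
           (\<lambda>k. alg_mult a V' (W t) k + alg_mult a (V t) W' k) t"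
  using assms unfolding has_vderiv_def alg_mult_def
  by (auto intro!: derivative_eq_intros simp: sum.distrib[symmetric] algebra_simps)

lemma has_real_derivative_pairing:
  assumes "has_vderiv V V' t" "has_vderiv W W' t"
  shows "((\<lambda>s. pairing eta (V s) (W s)) has_real_derivative
           pairing eta V' (W t) + pairing eta (V t) W') (at t)"
  using assms unfolding has_vderiv_def pairing_def
  by (auto intro!: derivative_eq_intros simp: sum.distrib[symmetric] algebra_simps)

lemma partial_eqI:
  assumes "((\<lambda>t. f (u(i := t))) has_real_derivative D) (at (u i))"
  shows "partial i f u = D"
  unfolding partial_def using assms by (rule DERIV_imp_deriv)

locale comm_invariant_form =
  fixes a :: "'n::finite \<Rightarrow> 'n \<Rightarrow> 'n \<Rightarrow> real" and eta :: "'n \<Rightarrow> 'n \<Rightarrow> real"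
  assumes comm: "\<And>k i j. a k i j = a k j i"
    and eta_sym: "\<And>i j. eta i j = eta j i"
    and frobenius: "\<And>i j k. (\<Sum>r\<in>UNIV. a r i j * eta r k) = (\<Sum>r\<in>UNIV. eta i r * a r j k)"
begin

abbreviation mult (infixl "\<star>" 70) where "x \<star> y \<equiv> alg_mult a x y"
abbreviation form ("\<langle>_, _\<rangle>") where "\<langle>x, y\<rangle> \<equiv> pairing eta x y"

lemma mult_commute: "x \<star> y = y \<star> x"
  unfolding alg_mult_def by (rule ext, subst sum.swap) (simp add: comm mult_ac)

lemma form_commute: "\<langle>x, y\<rangle> = \<langle>y, x\<rangle>"
  unfolding pairing_def by (subst sum.swap) (simp add: eta_sym mult_ac)

lemma lowered_rotate: "lowered eta a i j k = lowered eta a k i j"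
  using frobenius[of i j k] by (simp add: lowered_def eta_sym mult.commute)

lemma form_mult_assoc: "\<langle>x \<star> y, z\<rangle> = \<langle>x, y \<star> z\<rangle>"
proof -
  have "\<langle>x \<star> y, z\<rangle> = (\<Sum>k\<in>UNIV. \<Sum>i\<in>UNIV. \<Sum>j\<in>UNIV. lowered eta a k i j * z k * x i * y j)"
    by (simp add: form_commute[of "x \<star> y"] pairing_alg_mult_lowered)
  also have "\<dots> = (\<Sum>i\<in>UNIV. \<Sum>j\<in>UNIV. \<Sum>k\<in>UNIV. lowered eta a i j k * x i * y j * z k)"
    by (subst sum_rotate3, intro sum.cong refl, subst (2) lowered_rotate) (simp add: mult_ac)
  also have "\<dots> = \<langle>x, y \<star> z\<rangle>"
    by (simp add: pairing_alg_mult_lowered)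
  finally show ?thesis .
qed

lemma h3_eq_pairing: "h3 eta a u = \<langle>u, u \<star> u\<rangle> / 6"
  by (simp add: h3_def pairing_alg_mult_lowered)

lemma partial_h3: "partial p (h3 eta a) u = \<langle>unit_vec p, u \<star> u\<rangle> / 2"
proof (rule partial_eqI)
  let ?e = "unit_vec p"
  note line = has_vderiv_coordinate_line[of u p "u p"]
  have "((\<lambda>t. \<langle>u(p := t), u(p := t) \<star> u(p := t)\<rangle>) has_real_derivative
          \<langle>?e, u \<star> u\<rangle> + \<langle>u, \<lambda>k. (?e \<star> u) k + (u \<star> ?e) k\<rangle>) (at (u p))"
    using has_real_derivative_pairing[OF line has_vderiv_alg_mult[OF line line]] by simp
  moreover have "\<langle>u, \<lambda>k. (?e \<star> u) k + (u \<star> ?e) k\<rangle> = 2 * \<langle>?e, u \<star> u\<rangle>"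
    using form_mult_assoc[of u u ?e]
    by (simp add: pairing_scale_right mult_commute[of ?e] form_commute[of _ ?e])
  ultimately have "((\<lambda>t. \<langle>u(p := t), u(p := t) \<star> u(p := t)\<rangle>) has_real_derivative
      3 * \<langle>?e, u \<star> u\<rangle>) (at (u p))"
    by simp
  from DERIV_cdivide[OF this, of 6]
  show "((\<lambda>t. h3 eta a (u(p := t))) has_real_derivative \<langle>?e, u \<star> u\<rangle> / 2) (at (u p))"
    by (simp add: h3_eq_pairing)
qed

lemma h4_eq_pairing: "h4 eta a u = \<langle>u \<star> u, u \<star> u\<rangle> / 2"
proof -
  have "h4 eta a u = (\<Sum>i\<in>UNIV. (\<Sum>j\<in>UNIV. \<Sum>k\<in>UNIV. a i j k * u j * u k) * partial i (h3 eta a) u)"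
    by (simp add: h4_def sum_distrib_right)
  also have "\<dots> = (\<Sum>i\<in>UNIV. (u \<star> u) i * \<langle>unit_vec i, u \<star> u\<rangle> / 2)"
    by (simp add: partial_h3 alg_mult_def[of a u u])
  also have "\<dots> = \<langle>u \<star> u, u \<star> u\<rangle> / 2"
    by (simp add: pairing_expand_left[of _ "u \<star> u"] sum_divide_distrib)
  finally show ?thesis .
qed

lemma partial_h4: "partial p (h4 eta a) u = 2 * \<langle>unit_vec p, u \<star> (u \<star> u)\<rangle>"
proof (rule partial_eqI)
  let ?e = "unit_vec p"
  note line = has_vderiv_coordinate_line[of u p "u p"]
  note square = has_vderiv_alg_mult[OF line line, where a = a]
  have "((\<lambda>t. \<langle>u(p := t) \<star> u(p := t), u(p := t) \<star> u(p := t)\<rangle>) has_real_derivative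
          4 * \<langle>u \<star> u, u \<star> ?e\<rangle>) (at (u p))"
    using has_real_derivative_pairing[OF square square, where eta = eta]
    by (simp add: mult_commute[of ?e] form_commute[of "\<lambda>k. 2 * (u \<star> ?e) k"] pairing_scale_right)
  moreover have "\<langle>u \<star> u, u \<star> ?e\<rangle> = \<langle>?e, u \<star> (u \<star> u)\<rangle>"
    by (simp add: form_mult_assoc[symmetric] form_commute[of _ ?e] mult_commute[of "u \<star> u"])
  ultimately have "((\<lambda>t. \<langle>u(p := t) \<star> u(p := t), u(p := t) \<star> u(p := t)\<rangle>) has_real_derivative
      4 * \<langle>?e, u \<star> (u \<star> u)\<rangle>) (at (u p))"
    by simp
  from DERIV_cdivide[OF this, of 2]
  show "((\<lambda>t. h4 eta a (u(p := t))) has_real_derivative 2 * \<langle>?e, u \<star> (u \<star> u)\<rangle>) (at (u p))"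
    by (simp add: h4_eq_pairing)
qed

lemma partial_partial_h4:
  "partial i (partial p (h4 eta a)) u
     = 2 * \<langle>unit_vec i \<star> unit_vec p, u \<star> u\<rangle> + 4 * \<langle>u \<star> unit_vec i, u \<star> unit_vec p\<rangle>"
proof (rule partial_eqI)
  let ?e = "unit_vec i" and ?f = "unit_vec p"
  note line = has_vderiv_coordinate_line[of u i "u i"]
  have "((\<lambda>t. \<langle>?f, u(i := t) \<star> (u(i := t) \<star> u(i := t))\<rangle>) has_real_derivative
          \<langle>?f, ?e \<star> (u \<star> u)\<rangle> + 2 * \<langle>?f, u \<star> (u \<star> ?e)\<rangle>) (at (u i))"
    using has_real_derivative_pairing[OF has_vderiv_const[of ?f]
            has_vderiv_alg_mult[OF line has_vderiv_alg_mult[OF line line, where a = a], where a = a],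
            where eta = eta]
    by (simp add: mult_commute[of ?e u] alg_mult_scale_right pairing_add_right pairing_scale_right
        pairing_zero_left)
  moreover have "\<langle>?f, ?e \<star> (u \<star> u)\<rangle> = \<langle>?e \<star> ?f, u \<star> u\<rangle>"
    using form_mult_assoc[of ?f ?e "u \<star> u"] mult_commute[of ?f ?e] by simp
  moreover have "\<langle>?f, u \<star> (u \<star> ?e)\<rangle> = \<langle>u \<star> ?e, u \<star> ?f\<rangle>"
    using form_mult_assoc[of ?f u "u \<star> ?e"] mult_commute[of ?f u] form_commute[of "u \<star> ?e"] by simp
  ultimately have "((\<lambda>t. \<langle>?f, u(i := t) \<star> (u(i := t) \<star> u(i := t))\<rangle>) has_real_derivative
      \<langle>?e \<star> ?f, u \<star> u\<rangle> + 2 * \<langle>u \<star> ?e, u \<star> ?f\<rangle>) (at (u i))"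
    by simp
  from DERIV_cmult[OF this, of 2] show "((\<lambda>t. partial p (h4 eta a) (u(i := t))) has_real_derivative
      2 * \<langle>?e \<star> ?f, u \<star> u\<rangle> + 4 * \<langle>u \<star> ?e, u \<star> ?f\<rangle>) (at (u i))"
    by (simp add: partial_h4 algebra_simps)
qed

lemma conservation_sum_h4:
  "(\<Sum>i\<in>UNIV. \<Sum>j\<in>UNIV. a i j k * u j * partial i (partial p (h4 eta a)) u)
     = 2 * \<langle>(u \<star> unit_vec k) \<star> unit_vec p, u \<star> u\<rangle>
       + 4 * \<langle>u \<star> (u \<star> unit_vec k), u \<star> unit_vec p\<rangle>"
proof -
  let ?c = "u \<star> unit_vec k" and ?f = "unit_vec p"
  have "(\<Sum>i\<in>UNIV. \<Sum>j\<in>UNIV. a i j k * u j * partial i (partial p (h4 eta a)) u)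
      = (\<Sum>i\<in>UNIV. ?c i * (2 * \<langle>unit_vec i \<star> ?f, u \<star> u\<rangle> + 4 * \<langle>u \<star> unit_vec i, u \<star> ?f\<rangle>))"
    by (simp add: partial_partial_h4 alg_mult_unit_vec_right sum_distrib_right)
  also have "\<dots> = 2 * (\<Sum>i\<in>UNIV. ?c i * \<langle>unit_vec i \<star> ?f, u \<star> u\<rangle>)
                  + 4 * (\<Sum>i\<in>UNIV. ?c i * \<langle>u \<star> unit_vec i, u \<star> ?f\<rangle>)"
    by (simp add: algebra_simps sum.distrib sum_distrib_left)
  also have "(\<Sum>i\<in>UNIV. ?c i * \<langle>unit_vec i \<star> ?f, u \<star> u\<rangle>) = \<langle>?c \<star> ?f, u \<star> u\<rangle>"
    by (simp add: alg_mult_expand_left[of _ ?c] pairing_sum_left)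
  also have "(\<Sum>i\<in>UNIV. ?c i * \<langle>u \<star> unit_vec i, u \<star> ?f\<rangle>) = \<langle>u \<star> ?c, u \<star> ?f\<rangle>"
    by (simp add: alg_mult_expand_right[of _ u ?c] pairing_sum_left)
  finally show ?thesis .
qed

lemma conservation_sum_h4_antisym:
  "(\<Sum>i\<in>UNIV. \<Sum>j\<in>UNIV. a i j k * u j * partial i (partial p (h4 eta a)) u)
     - (\<Sum>i\<in>UNIV. \<Sum>j\<in>UNIV. a i j p * u j * partial i (partial k (h4 eta a)) u)
   = 2 * \<langle>jordan_associator a u (unit_vec k), unit_vec p\<rangle>"
proof -
  let ?e = "unit_vec k" and ?f = "unit_vec p"
  have symmetric_part: "\<langle>u \<star> (u \<star> ?e), u \<star> ?f\<rangle> = \<langle>u \<star> (u \<star> ?f), u \<star> ?e\<rangle>"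
    using form_mult_assoc[of "u \<star> ?e" u "u \<star> ?f"] mult_commute[of "u \<star> ?e" u]
      form_commute[of "u \<star> ?e"]
    by simp
  have "\<langle>(u \<star> ?e) \<star> ?f, u \<star> u\<rangle> = \<langle>(u \<star> ?e) \<star> (u \<star> u), ?f\<rangle>"
    using form_mult_assoc[of "u \<star> ?e" ?f "u \<star> u"] form_mult_assoc[of "u \<star> ?e" "u \<star> u" ?f]
      mult_commute[of ?f "u \<star> u"]
    by simp
  moreover have "\<langle>(u \<star> ?f) \<star> ?e, u \<star> u\<rangle> = \<langle>u \<star> (?e \<star> (u \<star> u)), ?f\<rangle>"
    using form_mult_assoc[of "u \<star> ?f" ?e "u \<star> u"] form_mult_assoc[of ?f u "?e \<star> (u \<star> u)"]
      mult_commute[of ?f u] form_commute[of ?f]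
    by simp
  ultimately show ?thesis
    by (simp add: conservation_sum_h4 symmetric_part jordan_associator_def pairing_diff_left)
qed

lemma conserved_density_h4_iff:
  "conserved_density a (h4 eta a)
     \<longleftrightarrow> (\<forall>u k p. \<langle>jordan_associator a u (unit_vec k), unit_vec p\<rangle> = 0)"
proof -
  have "(\<Sum>i\<in>UNIV. \<Sum>j\<in>UNIV. a i j k * u j * partial i (partial p (h4 eta a)) u)
        = (\<Sum>i\<in>UNIV. \<Sum>j\<in>UNIV. a i j p * u j * partial i (partial k (h4 eta a)) u)
      \<longleftrightarrow> \<langle>jordan_associator a u (unit_vec k), unit_vec p\<rangle> = 0" for u k p
    using conservation_sum_h4_antisym[of k u p] by auto
  then show ?thesis
    unfolding conserved_density_def by blast
qed

end

theorem proposition2: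
  fixes a :: "'n::finite \<Rightarrow> 'n \<Rightarrow> 'n \<Rightarrow> real"
    and eta :: "'n \<Rightarrow> 'n \<Rightarrow> real"
    and e1 :: 'n
  assumes comm: "\<And>k i j. a k i j = a k j i"
    and unity: "\<And>k i. a k e1 i = (if k = i then 1 else 0)"
    and eta_sym: "\<And>i j. eta i j = eta j i"
    and eta_nondeg: "\<And>v. (\<forall>j. (\<Sum>i\<in>UNIV. eta i j * v i) = 0) \<Longrightarrow> (\<forall>i. v i = 0)"
    and frobenius: "\<And>i j k. (\<Sum>r\<in>UNIV. a r i j * eta r k) = (\<Sum>r\<in>UNIV. eta i r * a r j k)"
  shows "conserved_density a (h4 eta a) \<longleftrightarrow> is_jordan a"
proof -
  interpret comm_invariant_form a eta
    using comm eta_sym frobenius by unfold_locales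
  have "conserved_density a (h4 eta a)
      \<longleftrightarrow> (\<forall>u k p. pairing eta (jordan_associator a u (unit_vec k)) (unit_vec p) = 0)"
    by (rule conserved_density_h4_iff)
  also have "\<dots> \<longleftrightarrow> (\<forall>u k. jordan_associator a u (unit_vec k) = (\<lambda>_. 0))"
    using pairing_unit_vec_eq_zero_iff[OF eta_nondeg] by blast
  also have "\<dots> \<longleftrightarrow> is_jordan a"
    by (rule is_jordan_iff_unit_vec[symmetric])
  finally show ?thesis .
qed

end
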